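(* Let $f\in C^1_b(\mathbb{R})$ and let $(u,m)$ be a classical solution of the MFG system. Let $K=K(\|f\|_{L^\infty},d)>0$ be the constant of Proposition 2.4, i.e. a constant depending only on $\|f\|_{L^\infty}$ and $d$ such that every classical solution $(\tilde u,\tilde m)$ of the MFG system satisfies $\|D\tilde u\|_{L^\infty}\le K$, and set $M:=2\|f\|_{L^\infty}+K^2/2$ and $\Lambda:=\max\{2M,\ K^2/2+\|m_0\|_{L^\infty}\|f'\|_{L^\infty}\}$. Then $(u,m)$ is stable provided that one of the following holds: (i) $f'\ge 0$; (ii) $\lambda>\Lambda$.
   Context: $\mathbb{T}^d$ is the flat torus, $\lambda>0$, $\alpha\in(0,1)$, $m_0\in C^{0,\alpha}(\mathbb{T}^d)$ a probability density. $C^1_b(\mathbb{R})$: $C^1$ functions with $f,f'$ bounded. The MFG system is $-\Delta u + \tfrac12|Du|^2 + \lambda u = f(m)$, $-\Delta m - \operatorname{div}(m Du) + \lambda m = \lambda m_0$ in $\mathbb{T}^d$ (classical solution: $C^2$ pair satisfying it pointwise). A classical solution $(u,m)$ is stable if $(v,\rho)=(0,0)$ is the unique classical solution of $-\Delta v + Du\cdot Dv + \lambda v = f'(m)\rho$, $-\Delta\rho - \operatorname{div}(\rho Du) + \lambda\rho = \operatorname{div}(m Dv)$ in $\mathbb{T}^d$. The constant $K$ does not depend on $\lambda$. *)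

theory Defs
  imports "HOL-Analysis.Analysis"
begin

text \<open>Functions on the flat torus T^d are represented as functions on R^d
 (type real^'d) that are 1-periodic in every coordinate direction.\<close>

definition periodic :: "(real^'d \<Rightarrow> 'b) \<Rightarrow> bool" where
  "periodic u \<longleftrightarrow> (\<forall>x i. u (x + axis i 1) = u x)"

definition pd :: "'d::finite \<Rightarrow> (real^'d \<Rightarrow> real) \<Rightarrow> real^'d \<Rightarrow> real" where
  "pd i u x = deriv (\<lambda>t. u (x + t *\<^sub>R axis i 1)) 0"

definition C1 :: "(real^'d::finite \<Rightarrow> real) \<Rightarrow> bool" where
  "C1 u \<longleftrightarrow> (\<forall>x. u differentiable (at x)) \<and> (\<forall>i. continuous_on UNIV (pd i u))"

definition C2 :: "(real^'d::finite \<Rightarrow> real) \<Rightarrow> bool" where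
  "C2 u \<longleftrightarrow> C1 u \<and> (\<forall>i. C1 (pd i u))"

definition grad :: "(real^'d::finite \<Rightarrow> real) \<Rightarrow> real^'d \<Rightarrow> real^'d" where
  "grad u x = (\<chi> i. pd i u x)"

definition lap :: "(real^'d::finite \<Rightarrow> real) \<Rightarrow> real^'d \<Rightarrow> real" where
  "lap u x = (\<Sum>i\<in>UNIV. pd i (pd i u) x)"

definition divg :: "(real^'d::finite \<Rightarrow> real^'d) \<Rightarrow> real^'d \<Rightarrow> real" where
  "divg V x = (\<Sum>i\<in>UNIV. pd i (\<lambda>y. V y $ i) x)"

definition supn :: "('a \<Rightarrow> real) \<Rightarrow> real" where
  "supn g = (SUP x. \<bar>g x\<bar>)"

definition C1b :: "(real \<Rightarrow> real) \<Rightarrow> bool" where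
  "C1b f \<longleftrightarrow> (\<forall>s. f differentiable (at s)) \<and> continuous_on UNIV (deriv f)
     \<and> bounded (range f) \<and> bounded (range (deriv f))"

definition holder_density :: "real \<Rightarrow> (real^'d::finite \<Rightarrow> real) \<Rightarrow> bool" where
  "holder_density \<alpha> m0 \<longleftrightarrow> periodic m0 \<and> (\<forall>x. 0 \<le> m0 x)
     \<and> (\<exists>C. \<forall>x y. \<bar>m0 x - m0 y\<bar> \<le> C * norm (x - y) powr \<alpha>)
     \<and> integral (cbox 0 One) m0 = 1"

definition mfg_sol ::
  "real \<Rightarrow> (real \<Rightarrow> real) \<Rightarrow> (real^'d::finite \<Rightarrow> real) \<Rightarrow> (real^'d \<Rightarrow> real) \<Rightarrow> (real^'d \<Rightarrow> real) \<Rightarrow> bool" where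
  "mfg_sol lam f m0 u m \<longleftrightarrow> periodic u \<and> periodic m \<and> C2 u \<and> C2 m \<and>
     (\<forall>x. - lap u x + (1/2) * (norm (grad u x))\<^sup>2 + lam * u x = f (m x)) \<and>
     (\<forall>x. - lap m x - divg (\<lambda>y. m y *\<^sub>R grad u y) x + lam * m x = lam * m0 x)"

definition stable ::
  "real \<Rightarrow> (real \<Rightarrow> real) \<Rightarrow> (real^'d::finite \<Rightarrow> real) \<Rightarrow> (real^'d \<Rightarrow> real) \<Rightarrow> bool" where
  "stable lam f u m \<longleftrightarrow> (\<forall>v \<rho>. periodic v \<and> periodic \<rho> \<and> C2 v \<and> C2 \<rho> \<and>
     (\<forall>x. - lap v x + grad u x \<bullet> grad v x + lam * v x = deriv f (m x) * \<rho> x) \<and>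
     (\<forall>x. - lap \<rho> x - divg (\<lambda>y. \<rho> y *\<^sub>R grad u y) x + lam * \<rho> x
            = divg (\<lambda>y. m y *\<^sub>R grad v y) x)
     \<longrightarrow> v = (\<lambda>_. 0) \<and> \<rho> = (\<lambda>_. 0))"

end

theory Submission
  imports Defs
begin

text \<open>
  Both conditions come from energy identities for the linearized system, integrated over the unit
  cube, where the divergence of every periodic \<open>C\<^sup>1\<close> vector field has integral zero.
  Testing the \<open>v\<close>-equation with \<open>\<rho>\<close> and the \<open>\<rho>\<close>-equation with \<open>v\<close> gives the
  Lasry-Lions identity \<open>\<integral> f'(m) \<rho>\<^sup>2 + m |Dv|\<^sup>2 = 0\<close>, and \<open>m \<ge> 0\<close> by the minimum principle
  applied to \<open>e\<^sup>u m\<close>.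

  If \<open>f' \<ge> 0\<close>, the identity forces \<open>f'(m) \<rho> = 0\<close>; the maximum principle then gives \<open>v = 0\<close>, and
  testing the homogeneous \<open>\<rho>\<close>-equation with \<open>e\<^sup>u \<rho>\<close> gives \<open>\<rho> = 0\<close>.

  If \<open>\<lambda>\<close> is large, testing the \<open>\<rho>\<close>-equation with \<open>\<rho>\<close> and completing the square gives
  \<open>(\<lambda> - K\<^sup>2/2) \<integral> \<rho>\<^sup>2 \<le> \<integral> m\<^sup>2 |Dv|\<^sup>2 / 2\<close>. The maximum principle bounds \<open>\<lambda> u \<le> \<parallel>f\<parallel>\<close>, hence
  \<open>\<Delta>u \<le> M\<close>, hence \<open>m \<le> 2 \<parallel>m\<^sub>0\<parallel>\<close> when \<open>\<lambda> \<ge> 2M\<close>. Combined with the Lasry-Lions identity the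
  right-hand side is at most \<open>\<parallel>m\<^sub>0\<parallel> \<parallel>f'\<parallel> \<integral> \<rho>\<^sup>2\<close>, so \<open>\<rho> = 0\<close> and then \<open>v = 0\<close>.
\<close>

lemma has_real_derivative_line:
  fixes g :: "real^'d::finite \<Rightarrow> real"
  assumes "(g has_derivative D) (at (x + s *\<^sub>R axis i 1))"
  shows "((\<lambda>t. g (x + t *\<^sub>R axis i 1)) has_real_derivative D (axis i 1)) (at s)"
proof -
  have "((\<lambda>t. x + t *\<^sub>R axis i 1) has_derivative (\<lambda>t. t *\<^sub>R axis i 1)) (at s)"
    by (auto intro!: derivative_eq_intros)
  from diff_chain_at[OF this assms]
  have "((\<lambda>t. g (x + t *\<^sub>R axis i 1)) has_derivative (\<lambda>t. t * D (axis i 1))) (at s)"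
    using linear_scale[OF has_derivative_linear[OF assms]] by (simp add: o_def)
  then show ?thesis
    by (rule has_derivative_imp_has_field_derivative) simp
qed

lemma pd_eq_has_derivative:
  fixes g :: "real^'d::finite \<Rightarrow> real"
  assumes "(g has_derivative D) (at x)"
  shows "pd i g x = D (axis i 1)"
  using has_real_derivative_line[of g D x 0 i] assms unfolding pd_def
  by (simp add: DERIV_imp_deriv)

lemma has_real_derivative_pd_line:
  fixes g :: "real^'d::finite \<Rightarrow> real"
  assumes "g differentiable (at (x + s *\<^sub>R axis i 1))"
  shows "((\<lambda>t. g (x + t *\<^sub>R axis i 1)) has_real_derivative pd i g (x + s *\<^sub>R axis i 1)) (at s)"
proof -
  obtain D where "(g has_derivative D) (at (x + s *\<^sub>R axis i 1))"
    using assms differentiable_def by blast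
  then show ?thesis
    using has_real_derivative_line pd_eq_has_derivative by metis
qed

lemma pd_const [simp]: "pd i (\<lambda>y. c) x = 0"
  unfolding pd_def by simp

lemma pd_add:
  assumes "a differentiable (at x)" "b differentiable (at x)"
  shows "pd i (\<lambda>y. a y + b y) x = pd i a x + pd i b x"
proof -
  obtain A B where AB: "(a has_derivative A) (at x)" "(b has_derivative B) (at x)"
    using assms differentiable_def by blast
  show ?thesis
    using pd_eq_has_derivative[OF has_derivative_add[OF AB]] AB
    by (simp add: pd_eq_has_derivative)
qed

lemma pd_minus:
  assumes "a differentiable (at x)"
  shows "pd i (\<lambda>y. - a y) x = - pd i a x"
proof -
  obtain A where A: "(a has_derivative A) (at x)"
    using assms differentiable_def by blast
  show ?thesis
    using pd_eq_has_derivative[OF has_derivative_minus[OF A]] A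
    by (simp add: pd_eq_has_derivative)
qed

lemma pd_diff:
  assumes "a differentiable (at x)" "b differentiable (at x)"
  shows "pd i (\<lambda>y. a y - b y) x = pd i a x - pd i b x"
  using pd_add[OF assms(1) differentiable_minus[OF assms(2)], of i] pd_minus[OF assms(2), of i]
  by simp

lemma pd_mult:
  assumes "a differentiable (at x)" "b differentiable (at x)"
  shows "pd i (\<lambda>y. a y * b y) x = pd i a x * b x + a x * pd i b x"
proof -
  obtain A B where AB: "(a has_derivative A) (at x)" "(b has_derivative B) (at x)"
    using assms differentiable_def by blast
  show ?thesis
    using pd_eq_has_derivative[OF has_derivative_mult[OF AB]] AB
    by (simp add: pd_eq_has_derivative algebra_simps)
qed

lemma pd_exp:
  assumes "a differentiable (at x)"
  shows "pd i (\<lambda>y. exp (a y)) x = exp (a x) * pd i a x"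
proof -
  obtain A where A: "(a has_derivative A) (at x)"
    using assms differentiable_def by blast
  show ?thesis
    using pd_eq_has_derivative[OF has_derivative_exp[OF A]] A
    by (simp add: pd_eq_has_derivative)
qed

lemma C1_imp_differentiable: "C1 g \<Longrightarrow> g differentiable (at x)"
  unfolding C1_def by blast

lemma C1_imp_continuous_on: "C1 g \<Longrightarrow> continuous_on UNIV g"
  by (meson C1_imp_differentiable continuous_at_imp_continuous_on differentiable_imp_continuous_within)

lemma C1_imp_continuous_on_pd: "C1 g \<Longrightarrow> continuous_on UNIV (pd i g)"
  unfolding C1_def by blast

lemma C2_imp_C1: "C2 g \<Longrightarrow> C1 g"
  unfolding C2_def by blast

lemma C2_imp_C1_pd: "C2 g \<Longrightarrow> C1 (pd i g)"
  unfolding C2_def by blast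

lemma C1_add:
  assumes "C1 a" "C1 b"
  shows "C1 (\<lambda>y. a y + b y)"
proof -
  have "pd i (\<lambda>y. a y + b y) = (\<lambda>y. pd i a y + pd i b y)" for i
    using assms by (intro ext) (simp add: pd_add C1_imp_differentiable)
  then show ?thesis
    using assms unfolding C1_def
    by (simp add: continuous_on_add)
qed

lemma C1_minus:
  assumes "C1 a"
  shows "C1 (\<lambda>y. - a y)"
proof -
  have "pd i (\<lambda>y. - a y) = (\<lambda>y. - pd i a y)" for i
    using assms by (intro ext) (simp add: pd_minus C1_imp_differentiable)
  then show ?thesis
    using assms unfolding C1_def
    by (simp add: continuous_on_minus)
qed

lemma C1_diff:
  assumes "C1 a" "C1 b"
  shows "C1 (\<lambda>y. a y - b y)"
  using C1_add[OF assms(1) C1_minus[OF assms(2)]] by simp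

lemma C1_mult:
  assumes "C1 a" "C1 b"
  shows "C1 (\<lambda>y. a y * b y)"
proof -
  have "pd i (\<lambda>y. a y * b y) = (\<lambda>y. pd i a y * b y + a y * pd i b y)" for i
    using assms by (intro ext) (simp add: pd_mult C1_imp_differentiable)
  moreover have "continuous_on UNIV (\<lambda>y. pd i a y * b y + a y * pd i b y)" for i
    using assms
    by (intro continuous_intros C1_imp_continuous_on C1_imp_continuous_on_pd)
  ultimately show ?thesis
    using assms unfolding C1_def by simp
qed

lemma C1_exp:
  assumes "C1 a"
  shows "C1 (\<lambda>y. exp (a y))"
proof -
  have "pd i (\<lambda>y. exp (a y)) = (\<lambda>y. exp (a y) * pd i a y)" for i
    using assms by (intro ext) (simp add: pd_exp C1_imp_differentiable)
  moreover have "continuous_on UNIV (\<lambda>y. exp (a y) * pd i a y)" for i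
    using assms
    by (intro continuous_intros C1_imp_continuous_on C1_imp_continuous_on_pd)
  moreover have "(\<lambda>y. exp (a y)) differentiable (at x)" for x
    using has_derivative_exp C1_imp_differentiable[OF assms, of x]
    unfolding differentiable_def by blast
  ultimately show ?thesis
    unfolding C1_def by simp
qed

lemma C2_mult:
  assumes "C2 a" "C2 b"
  shows "C2 (\<lambda>y. a y * b y)"
proof -
  have "pd i (\<lambda>y. a y * b y) = (\<lambda>y. pd i a y * b y + a y * pd i b y)" for i
    using assms by (intro ext) (simp add: pd_mult C1_imp_differentiable C2_imp_C1)
  then show ?thesis
    using assms unfolding C2_def by (simp add: C1_add C1_mult)
qed

lemma C2_exp:
  assumes "C2 a"
  shows "C2 (\<lambda>y. exp (a y))"
proof -
  have "pd i (\<lambda>y. exp (a y)) = (\<lambda>y. exp (a y) * pd i a y)" for i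
    using assms by (intro ext) (simp add: pd_exp C1_imp_differentiable C2_imp_C1)
  then show ?thesis
    using assms unfolding C2_def by (simp add: C1_mult C1_exp)
qed

lemma axis_in_Basis: "axis i (1::real) \<in> (Basis :: (real^'d::finite) set)"
  unfolding Basis_vec_def by auto

lemma One_nth [simp]: "(One::real^'d::finite) $ i = 1"
proof -
  have "One \<bullet> axis i (1::real) = (1::real)"
    using inner_sum_Basis[OF axis_in_Basis[of i]] .
  then show ?thesis by (simp add: inner_axis)
qed

lemma sum_Basis_nth [simp]: "(\<Sum>b\<in>(Basis::(real^'d::finite) set). b $ i) = 1"
  using One_nth[of i] unfolding sum_component .

lemma periodic_add: "periodic a \<Longrightarrow> periodic b \<Longrightarrow> periodic (\<lambda>y. a y + b y)"
  unfolding periodic_def by simp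

lemma periodic_mult: "periodic a \<Longrightarrow> periodic b \<Longrightarrow> periodic (\<lambda>y. a y * b y)"
  unfolding periodic_def by simp

lemma periodic_exp: "periodic a \<Longrightarrow> periodic (\<lambda>y. exp (a y))"
  unfolding periodic_def by simp

lemma periodic_pd:
  assumes "periodic g"
  shows "periodic (pd i g)"
proof -
  have "(\<lambda>t. g (x + axis j 1 + t *\<^sub>R axis i 1)) = (\<lambda>t. g (x + t *\<^sub>R axis i 1))" for x j
    using assms unfolding periodic_def by (metis add.assoc add.commute)
  then show ?thesis
    unfolding periodic_def pd_def by simp
qed

lemma periodic_grad:
  assumes "periodic g"
  shows "periodic (grad g)"
  using periodic_pd[OF assms] unfolding periodic_def grad_def by simp

lemma periodic_shift_int:
  assumes "periodic g"
  shows "g (x + of_int n *\<^sub>R axis i 1) = g x"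
proof (induction n arbitrary: x rule: int_induct[where k = 0])
  case (step1 n)
  have "g (x + of_int (n + 1) *\<^sub>R axis i 1) = g ((x + of_int n *\<^sub>R axis i 1) + axis i 1)"
    by (simp add: algebra_simps)
  with assms step1 show ?case
    unfolding periodic_def by simp
next
  case (step2 n)
  have "g (x + of_int n *\<^sub>R axis i 1) = g ((x + of_int (n - 1) *\<^sub>R axis i 1) + axis i 1)"
    by (simp add: algebra_simps)
  with assms step2 show ?case
    unfolding periodic_def by simp
qed simp

lemma periodic_shift_sum:
  assumes "periodic g" "finite S"
  shows "g (x + (\<Sum>j\<in>S. of_int (n j) *\<^sub>R axis j 1)) = g x"
  using assms(2)
proof (induction S arbitrary: x)
  case (insert j S)
  then have "g (x + (\<Sum>j\<in>insert j S. of_int (n j) *\<^sub>R axis j 1))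
      = g ((x + of_int (n j) *\<^sub>R axis j 1) + (\<Sum>j\<in>S. of_int (n j) *\<^sub>R axis j 1))"
    by (simp add: algebra_simps)
  also have "\<dots> = g x"
    using insert.IH periodic_shift_int[OF assms(1)] by simp
  finally show ?case .
qed simp

lemma periodic_image_cube:
  fixes g :: "real^'d::finite \<Rightarrow> 'b"
  assumes "periodic g"
  shows "g ` cbox 0 One = range g"
proof -
  have "g x \<in> g ` cbox 0 One" for x
  proof
    define y where "y = x + (\<Sum>j\<in>UNIV. of_int (- \<lfloor>x $ j\<rfloor>) *\<^sub>R axis j 1)"
    have "y $ k = x $ k - of_int \<lfloor>x $ k\<rfloor>" for k
      unfolding y_def by (simp add: axis_def if_distrib cong: if_cong)
    then show "y \<in> cbox 0 One"
      by (simp add: mem_box_cart frac_def[symmetric] frac_lt_1 less_imp_le)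
    show "g x = g y"
      unfolding y_def by (rule periodic_shift_sum[OF assms, symmetric]) simp
  qed
  then show ?thesis by blast
qed

lemma periodic_attains_max:
  fixes g :: "real^'d::finite \<Rightarrow> real"
  assumes "periodic g" "continuous_on UNIV g"
  obtains x0 where "\<And>x. g x \<le> g x0"
proof -
  obtain x0 where "\<forall>y\<in>cbox 0 One. g y \<le> g x0"
    using continuous_attains_sup[OF compact_cbox _ continuous_on_subset[OF assms(2)], of 0 One]
    by (auto simp: box_ne_empty)
  then show thesis
    using periodic_image_cube[OF assms(1)] by (metis image_iff rangeI that)
qed

lemma periodic_attains_min:
  fixes g :: "real^'d::finite \<Rightarrow> real"
  assumes "periodic g" "continuous_on UNIV g"
  obtains x0 where "\<And>x. g x0 \<le> g x"
proof -
  obtain x0 where "\<forall>y\<in>cbox 0 One. g x0 \<le> g y"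
    using continuous_attains_inf[OF compact_cbox _ continuous_on_subset[OF assms(2)], of 0 One]
    by (auto simp: box_ne_empty)
  then show thesis
    using periodic_image_cube[OF assms(1)] by (metis image_iff rangeI that)
qed

section \<open>Maximum principle\<close>

lemma max_imp_deriv_eq_0_second_deriv_nonpos:
  fixes \<phi> \<phi>' :: "real \<Rightarrow> real"
  assumes deriv: "\<And>t. (\<phi> has_real_derivative \<phi>' t) (at t)"
    and deriv2: "(\<phi>' has_real_derivative c) (at a)"
    and max: "\<And>t. \<phi> t \<le> \<phi> a"
  shows "\<phi>' a = 0 \<and> c \<le> 0"
proof
  show "\<phi>' a = 0"
    using DERIV_local_max[OF deriv zero_less_one] max by blast
  show "c \<le> 0"
  proof (rule ccontr)
    assume "\<not> c \<le> 0"
    then obtain d where "d > 0" and inc: "\<And>h. 0 < h \<Longrightarrow> h < d \<Longrightarrow> \<phi>' a < \<phi>' (a + h)"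
      using DERIV_pos_inc_right[OF deriv2] by force
    then obtain z where z: "a < z" "z < a + d / 2" "\<phi> (a + d / 2) - \<phi> a = d / 2 * \<phi>' z"
      using MVT2[of a "a + d / 2" \<phi> \<phi>'] deriv by force
    have "0 < \<phi>' z"
      using inc[of "z - a"] z \<open>\<phi>' a = 0\<close> by simp
    then have "0 < d / 2 * \<phi>' z"
      using \<open>d > 0\<close> by simp
    then show False
      using z(3) max[of "a + d / 2"] by linarith
  qed
qed

lemma min_imp_deriv_eq_0_second_deriv_nonneg:
  fixes \<phi> \<phi>' :: "real \<Rightarrow> real"
  assumes "\<And>t. (\<phi> has_real_derivative \<phi>' t) (at t)"
    and "(\<phi>' has_real_derivative c) (at a)"
    and "\<And>t. \<phi> a \<le> \<phi> t"
  shows "\<phi>' a = 0 \<and> 0 \<le> c"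
  using max_imp_deriv_eq_0_second_deriv_nonpos[of "\<lambda>t. - \<phi> t" "\<lambda>t. - \<phi>' t" "- c" a] assms
  by (simp add: DERIV_minus)

lemma max_imp_grad_eq_0_lap_nonpos:
  fixes w :: "real^'d::finite \<Rightarrow> real"
  assumes w: "C2 w" and max: "\<And>x. w x \<le> w x0"
  shows "grad w x0 = 0 \<and> lap w x0 \<le> 0"
proof -
  have "pd i w x0 = 0 \<and> pd i (pd i w) x0 \<le> 0" for i
    using max_imp_deriv_eq_0_second_deriv_nonpos[where a = 0, OF
        has_real_derivative_pd_line has_real_derivative_pd_line[of "pd i w" x0 0 i]] max
    using w by (simp add: C1_imp_differentiable C2_imp_C1 C2_imp_C1_pd)
  then show ?thesis
    by (simp add: grad_def lap_def vec_eq_iff sum_nonpos)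
qed

lemma min_imp_grad_eq_0_lap_nonneg:
  fixes w :: "real^'d::finite \<Rightarrow> real"
  assumes w: "C2 w" and min: "\<And>x. w x0 \<le> w x"
  shows "grad w x0 = 0 \<and> 0 \<le> lap w x0"
proof -
  have "pd i w x0 = 0 \<and> 0 \<le> pd i (pd i w) x0" for i
    using min_imp_deriv_eq_0_second_deriv_nonneg[where a = 0, OF
        has_real_derivative_pd_line has_real_derivative_pd_line[of "pd i w" x0 0 i]] min
    using w by (simp add: C1_imp_differentiable C2_imp_C1 C2_imp_C1_pd)
  then show ?thesis
    by (simp add: grad_def lap_def vec_eq_iff sum_nonneg)
qed

section \<open>Integration over the unit cube\<close>

lemma continuous_on_imp_integrable_on_cbox:
  fixes h :: "'a::euclidean_space \<Rightarrow> 'b::banach"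
  shows "continuous_on UNIV h \<Longrightarrow> h integrable_on cbox a b"
  by (meson continuous_on_subset integrable_continuous subset_UNIV)

lemma integral_cbox_translate:
  fixes h :: "real^'d::finite \<Rightarrow> real"
  assumes "continuous_on UNIV h"
  shows "integral (cbox a b) (\<lambda>x. h (x + c)) = integral (cbox (a + c) (b + c)) h"
proof -
  have "(h has_integral integral (cbox (a + c) (b + c)) h) (cbox (a + c) (b + c))"
    by (rule integrable_integral[OF continuous_on_imp_integrable_on_cbox[OF assms]])
  from has_integral_affinity[OF this, of 1 c]
  have "((\<lambda>x. h (x + c)) has_integral integral (cbox (a + c) (b + c)) h)
      ((\<lambda>x. x + - c) ` cbox (a + c) (b + c))"
    by simp
  moreover have "(\<lambda>x. x + - c) ` cbox (a + c) (b + c) = cbox a b"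
    using cbox_translation[of "- c" "a + c" "b + c"] by (simp add: add.commute)
  ultimately show ?thesis
    by (simp add: integral_unique)
qed

lemma cube_inter_halfspace_le:
  assumes "0 \<le> c" "c \<le> 1"
  shows "cbox 0 (One::real^'d::finite) \<inter> {x. x \<bullet> axis i 1 \<le> c}
    = cbox 0 (\<chi> j. if j = i then c else 1)"
  using assms by (auto simp: mem_box_cart inner_axis split: if_splits) (metis order.trans)

lemma cube_inter_halfspace_ge:
  assumes "0 \<le> c" "c \<le> 1"
  shows "cbox 0 (One::real^'d::finite) \<inter> {x. c \<le> x \<bullet> axis i 1}
    = cbox (\<chi> j. if j = i then c else 0) One"
  using assms by (auto simp: mem_box_cart inner_axis split: if_splits) (metis order.trans)

lemma integral_cube_translate_periodic:
  fixes g :: "real^'d::finite \<Rightarrow> real"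
  assumes per: "periodic g" and cont: "continuous_on UNIV g" and t: "0 \<le> t" "t \<le> 1"
  shows "integral (cbox 0 One) (\<lambda>x. g (x + t *\<^sub>R axis i 1)) = integral (cbox 0 One) g"
proof -
  let ?e = "axis i 1 :: real^'d"
  let ?C = "cbox 0 One :: (real^'d) set"
  define T where "T = ((\<chi> j. if j = i then t else 0) :: real^'d)"
  define A where "A = ((\<chi> j. if j = i then 1 - t else 1) :: real^'d)"
  define B where "B = ((\<chi> j. if j = i then 1 - t else 0) :: real^'d)"
  define A' where "A' = ((\<chi> j. if j = i then t else 1) :: real^'d)"
  have cont_shift: "continuous_on UNIV (\<lambda>x. g (x + c))" for c
    by (rule continuous_on_compose2[OF cont]) (simp_all add: continuous_intros)
  have "t *\<^sub>R ?e = T"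
    unfolding T_def by (simp add: vec_eq_iff axis_def)
  \<comment> \<open>Cut the cube at \<open>x\<^sub>i = 1 - t\<close>: the lower slab is moved onto \<open>{x\<^sub>i \<ge> t}\<close>,
    the upper one, by periodicity, onto \<open>{x\<^sub>i \<le> t}\<close>.\<close>
  then have "integral ?C (\<lambda>x. g (x + t *\<^sub>R ?e))
      = integral (?C \<inter> {x. x \<bullet> ?e \<le> 1 - t}) (\<lambda>x. g (x + T))
      + integral (?C \<inter> {x. 1 - t \<le> x \<bullet> ?e}) (\<lambda>x. g (x + T))"
    by (simp add: integral_split[OF continuous_on_imp_integrable_on_cbox[OF cont_shift] axis_in_Basis])
  also have "integral (?C \<inter> {x. x \<bullet> ?e \<le> 1 - t}) (\<lambda>x. g (x + T)) = integral (cbox T One) g"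
  proof -
    have "A + T = One"
      unfolding A_def T_def by (simp add: vec_eq_iff)
    then show ?thesis
      using integral_cbox_translate[OF cont, of 0 A T] t
      by (simp add: cube_inter_halfspace_le A_def)
  qed
  also have "integral (?C \<inter> {x. 1 - t \<le> x \<bullet> ?e}) (\<lambda>x. g (x + T)) = integral (cbox 0 A') g"
  proof -
    have "g (x + T) = g (x + (T - ?e))" for x
      using per unfolding periodic_def by (metis add.assoc diff_add_cancel)
    moreover have "B + (T - ?e) = 0" "One + (T - ?e) = A'"
      unfolding A'_def B_def T_def by (simp_all add: vec_eq_iff axis_def)
    ultimately show ?thesis
      using integral_cbox_translate[OF cont, of B One "T - ?e"] t
      by (simp add: cube_inter_halfspace_ge B_def)
  qed
  also have "integral (cbox T One) g + integral (cbox 0 A') g = integral ?C g"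
    using integral_split[OF continuous_on_imp_integrable_on_cbox[OF cont] axis_in_Basis, of 0 One i t] t
    by (simp add: cube_inter_halfspace_le cube_inter_halfspace_ge A'_def T_def)
  finally show ?thesis .
qed

lemma integral_cube_pd_periodic:
  fixes g :: "real^'d::finite \<Rightarrow> real"
  assumes per: "periodic g" and g: "C1 g"
  shows "integral (cbox 0 One) (pd i g) = 0"
proof -
  let ?e = "axis i 1 :: real^'d"
  let ?C = "cbox 0 One :: (real^'d) set"
  \<comment> \<open>\<open>\<Phi>\<close> is constant by periodicity, and its derivative at \<open>0\<close> is the integral of \<open>pd i g\<close>.\<close>
  define \<Phi> where "\<Phi> s = integral ?C (\<lambda>x. g (x + s *\<^sub>R ?e))" for s
  have cont: "continuous_on UNIV g"
    using g by (rule C1_imp_continuous_on)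
  have deriv_line: "((\<lambda>s. g (x + s *\<^sub>R ?e)) has_field_derivative pd i g (x + s *\<^sub>R ?e))
      (at s within {0..1})" for s x
    using g by (intro has_field_derivative_at_within[OF has_real_derivative_pd_line] C1_imp_differentiable)
  have integrable: "(\<lambda>x. g (x + s *\<^sub>R ?e)) integrable_on ?C" for s
    by (rule continuous_on_imp_integrable_on_cbox, rule continuous_on_compose2[OF cont])
      (auto intro!: continuous_intros)
  have "continuous_on UNIV (\<lambda>p::real \<times> (real^'d). pd i g (snd p + fst p *\<^sub>R ?e))"
    by (rule continuous_on_compose2[OF C1_imp_continuous_on_pd[OF g]]) (auto intro!: continuous_intros)
  then have cont_deriv: "continuous_on ({0..1} \<times> ?C) (\<lambda>(s, x). pd i g (x + s *\<^sub>R ?e))"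
    using continuous_on_subset by (force simp: case_prod_beta)
  have "(\<Phi> has_field_derivative integral ?C (\<lambda>x. pd i g (x + 0 *\<^sub>R ?e))) (at 0 within {0..1})"
    unfolding \<Phi>_def
    by (rule leibniz_rule_field_derivative[OF deriv_line integrable cont_deriv])
      (auto simp: convex_real_interval)
  then have "(\<Phi> has_derivative (*) (integral ?C (pd i g))) (at 0 within {0..1})"
    unfolding has_field_derivative_def by simp
  moreover have "\<Phi> s = integral ?C g" if "s \<in> {0..1}" for s
    unfolding \<Phi>_def using integral_cube_translate_periodic[OF per cont] that by simp
  ultimately have "((\<lambda>s. integral ?C g) has_field_derivative integral ?C (pd i g)) (at 0 within {0..1})"
    unfolding has_field_derivative_def
    by (metis has_derivative_transform_within[OF _ zero_less_one] dist_commute atLeastAtMost_iff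
        order_refl zero_le_one)
  moreover have "((\<lambda>s. integral ?C g) has_field_derivative 0) (at 0 within {0..1})"
    by (rule DERIV_const)
  moreover have "at (0::real) within {0..1} \<noteq> bot"
    using at_within_Icc_at_right[of "0::real" 1] trivial_limit_at_right_real by simp
  ultimately show ?thesis
    unfolding has_real_derivative_iff_has_vector_derivative
    by (rule vector_derivative_unique_within[rotated])
qed

lemma periodic_nonneg_integral_cube_eq_0:
  fixes h :: "real^'d::finite \<Rightarrow> real"
  assumes "periodic h" "continuous_on UNIV h" "\<And>x. 0 \<le> h x"
    and "integral (cbox 0 One) h = 0"
  shows "h x = 0"
proof -
  have "continuous_on (cbox 0 One) h"
    using assms(2) by (rule continuous_on_subset) simp
  moreover have "(h has_integral 0) (cbox 0 One)"
    using integrable_integral[OF continuous_on_imp_integrable_on_cbox[OF assms(2), of 0 One]] assms(4)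
    by simp
  moreover have "box 0 (One::real^'d) \<noteq> {}"
    by (simp add: box_ne_empty)
  ultimately have "h y = 0" if "y \<in> cbox 0 One" for y
    using has_integral_0_cbox_imp_0 assms(3) that by blast
  then show ?thesis
    using periodic_image_cube[OF assms(1)] by (metis image_iff rangeI)
qed

definition C1_field :: "(real^'d::finite \<Rightarrow> real^'d) \<Rightarrow> bool" where
  "C1_field V \<longleftrightarrow> (\<forall>i. C1 (\<lambda>y. V y $ i))"

lemma C1_field_grad: "C2 b \<Longrightarrow> C1_field (grad b)"
  unfolding C1_field_def grad_def by (simp add: C2_imp_C1_pd)

lemma C1_field_add: "C1_field V \<Longrightarrow> C1_field W \<Longrightarrow> C1_field (\<lambda>y. V y + W y)"
  unfolding C1_field_def by (simp add: C1_add)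

lemma C1_field_diff: "C1_field V \<Longrightarrow> C1_field W \<Longrightarrow> C1_field (\<lambda>y. V y - W y)"
  unfolding C1_field_def by (simp add: C1_diff)

lemma C1_field_scaleR: "C1 a \<Longrightarrow> C1_field V \<Longrightarrow> C1_field (\<lambda>y. a y *\<^sub>R V y)"
  unfolding C1_field_def by (simp add: C1_mult)

lemma C1_field_imp_continuous_on:
  assumes "C1_field V"
  shows "continuous_on UNIV V"
proof -
  have "continuous_on UNIV (\<lambda>y. \<chi> i. V y $ i)"
    using assms unfolding C1_field_def by (intro continuous_on_vec_lambda C1_imp_continuous_on) simp
  then show ?thesis
    by simp
qed

lemma periodic_diff: "periodic a \<Longrightarrow> periodic b \<Longrightarrow> periodic (\<lambda>y. a y - b y)"
  unfolding periodic_def by simp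

lemma periodic_scaleR: "periodic a \<Longrightarrow> periodic V \<Longrightarrow> periodic (\<lambda>y. a y *\<^sub>R V y)"
  unfolding periodic_def by simp

lemma grad_mult:
  assumes "a differentiable (at x)" "b differentiable (at x)"
  shows "grad (\<lambda>y. a y * b y) x = a x *\<^sub>R grad b x + b x *\<^sub>R grad a x"
  using assms by (simp add: grad_def vec_eq_iff pd_mult)

lemma grad_exp:
  assumes "a differentiable (at x)"
  shows "grad (\<lambda>y. exp (a y)) x = exp (a x) *\<^sub>R grad a x"
  using assms by (simp add: grad_def vec_eq_iff pd_exp)

lemma lap_eq_divg_grad: "lap b x = divg (grad b) x"
  unfolding lap_def divg_def grad_def by simp

lemma divg_add:
  assumes "C1_field V" "C1_field W"
  shows "divg (\<lambda>y. V y + W y) x = divg V x + divg W x"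
  using assms unfolding C1_field_def
  by (simp add: divg_def pd_add C1_imp_differentiable sum.distrib)

lemma divg_diff:
  assumes "C1_field V" "C1_field W"
  shows "divg (\<lambda>y. V y - W y) x = divg V x - divg W x"
  using assms unfolding C1_field_def
  by (simp add: divg_def pd_diff C1_imp_differentiable sum_subtractf)

lemma divg_scaleR:
  assumes "C1 a" "C1_field V"
  shows "divg (\<lambda>y. a y *\<^sub>R V y) x = grad a x \<bullet> V x + a x * divg V x"
  using assms unfolding C1_field_def
  by (simp add: divg_def grad_def inner_vec_def pd_mult C1_imp_differentiable
      sum.distrib sum_distrib_left)

lemma divg_scaleR_grad:
  assumes "C1 a" "C2 b"
  shows "divg (\<lambda>y. a y *\<^sub>R grad b y) x = grad a x \<bullet> grad b x + a x * lap b x"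
  using assms by (simp add: divg_scaleR C1_field_grad lap_eq_divg_grad)

lemma integral_cube_divg_periodic:
  assumes "periodic V" "C1_field V"
  shows "integral (cbox 0 One) (divg V) = 0"
proof -
  have "periodic (\<lambda>y. V y $ i)" for i
    using assms(1) unfolding periodic_def by simp
  then have "integral (cbox 0 One) (pd i (\<lambda>y. V y $ i)) = 0" for i
    using assms(2) unfolding C1_field_def by (simp add: integral_cube_pd_periodic)
  moreover have "integral (cbox 0 One) (divg V) = (\<Sum>i\<in>UNIV. integral (cbox 0 One) (pd i (\<lambda>y. V y $ i)))"
    unfolding divg_def[abs_def] using assms(2) unfolding C1_field_def
    by (intro integral_sum continuous_on_imp_integrable_on_cbox C1_imp_continuous_on_pd) auto
  ultimately show ?thesis
    by simp
qed

lemma continuous_on_divg: "C1_field V \<Longrightarrow> continuous_on UNIV (divg V)"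
  unfolding C1_field_def divg_def[abs_def]
  by (intro continuous_on_sum C1_imp_continuous_on_pd) simp

lemma integral_cube_nonpos_if_le_divg:
  assumes "periodic V" "C1_field V" "continuous_on UNIV h" "\<And>x. h x \<le> divg V x"
  shows "integral (cbox 0 One) h \<le> 0"
proof -
  have "integral (cbox 0 One) h \<le> integral (cbox 0 One) (divg V)"
    using assms(2-4) by (intro integral_le continuous_on_imp_integrable_on_cbox continuous_on_divg)
  then show ?thesis
    using integral_cube_divg_periodic[OF assms(1,2)] by simp
qed

lemma inner_add_ge:
  fixes a b c :: "'a::real_inner"
  shows "- (norm b)\<^sup>2 / 2 - (norm c)\<^sup>2 / 2 \<le> a \<bullet> (a + b + c)"
proof -
  have "4 * (a \<bullet> (a + b + c)) + 2 * (norm b)\<^sup>2 + 2 * (norm c)\<^sup>2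
      = (norm (2 *\<^sub>R a + b + c))\<^sup>2 + (norm (b - c))\<^sup>2"
    by (simp add: power2_norm_eq_inner inner_add_left inner_add_right inner_diff_left
        inner_diff_right inner_commute algebra_simps)
  moreover have "0 \<le> (norm (2 *\<^sub>R a + b + c))\<^sup>2 + (norm (b - c))\<^sup>2"
    by simp
  ultimately show ?thesis
    by linarith
qed

section \<open>The Hamilton-Jacobi and Fokker-Planck equations\<close>

text \<open>The Fokker-Planck operator \<open>- lap m - divg (m Du)\<close> is \<open>- divg (fokker_planck_flux u m)\<close>,
  and the weight \<open>e\<^sup>u\<close> turns this flux into the gradient of \<open>e\<^sup>u m\<close>; this drives both the
  minimum principle for \<open>m\<close> and uniqueness for the homogeneous equation.\<close>

definition fokker_planck_flux ::
  "(real^'d::finite \<Rightarrow> real) \<Rightarrow> (real^'d \<Rightarrow> real) \<Rightarrow> real^'d \<Rightarrow> real^'d" where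
  "fokker_planck_flux u m y = grad m y + m y *\<^sub>R grad u y"

lemma C1_field_fokker_planck_flux: "C2 u \<Longrightarrow> C2 m \<Longrightarrow> C1_field (fokker_planck_flux u m)"
  unfolding fokker_planck_flux_def[abs_def]
  by (simp add: C1_field_add C1_field_scaleR C1_field_grad C2_imp_C1)

lemma periodic_fokker_planck_flux:
  "periodic u \<Longrightarrow> periodic m \<Longrightarrow> periodic (fokker_planck_flux u m)"
  unfolding fokker_planck_flux_def[abs_def]
  by (simp add: periodic_add periodic_scaleR periodic_grad)

lemma divg_fokker_planck_flux:
  assumes "C2 u" "C2 m"
  shows "divg (fokker_planck_flux u m) x = lap m x + divg (\<lambda>y. m y *\<^sub>R grad u y) x"
  using assms unfolding fokker_planck_flux_def[abs_def]
  by (simp add: divg_add C1_field_scaleR C1_field_grad C2_imp_C1 lap_eq_divg_grad)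

lemma grad_exp_mult:
  assumes "C1 u" "C1 m"
  shows "grad (\<lambda>y. exp (u y) * m y) x = exp (u x) *\<^sub>R fokker_planck_flux u m x"
proof -
  have "(\<lambda>y. exp (u y)) differentiable (at x)"
    using assms(1) by (intro C1_imp_differentiable C1_exp)
  then show ?thesis
    using assms unfolding fokker_planck_flux_def
    by (simp add: grad_mult grad_exp C1_imp_differentiable scaleR_add_right algebra_simps)
qed

lemma elliptic_periodic_eq_0:
  fixes v :: "real^'d::finite \<Rightarrow> real"
  assumes v: "C2 v" "periodic v" and lam: "0 < lam"
    and eq: "\<And>x. - lap v x + B x \<bullet> grad v x + lam * v x = 0"
  shows "v x = 0"
proof -
  have cont: "continuous_on UNIV v"
    using v by (simp add: C1_imp_continuous_on C2_imp_C1)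
  obtain x0 where x0: "\<And>x. v x \<le> v x0"
    using periodic_attains_max[OF v(2) cont] by blast
  obtain x1 where x1: "\<And>x. v x1 \<le> v x"
    using periodic_attains_min[OF v(2) cont] by blast
  have "lam * v x0 \<le> 0"
    using max_imp_grad_eq_0_lap_nonpos[OF v(1) x0] eq[of x0] by simp
  then have "v x0 \<le> 0"
    using lam by (simp add: mult_le_0_iff)
  moreover have "0 \<le> lam * v x1"
    using min_imp_grad_eq_0_lap_nonneg[OF v(1) x1] eq[of x1] by simp
  then have "0 \<le> v x1"
    using lam by (simp add: zero_le_mult_iff)
  ultimately show ?thesis
    using x0[of x] x1[of x] by linarith
qed

lemma fokker_planck_nonneg:
  fixes u m m0 :: "real^'d::finite \<Rightarrow> real"
  assumes u: "C2 u" "periodic u" and m: "C2 m" "periodic m" and lam: "0 < lam"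
    and m0: "\<And>x. 0 \<le> m0 x"
    and eq: "\<And>x. - lap m x - divg (\<lambda>y. m y *\<^sub>R grad u y) x + lam * m x = lam * m0 x"
  shows "0 \<le> m x"
proof -
  define w where "w = (\<lambda>y. exp (u y) * m y)"
  have w: "C2 w" "periodic w"
    unfolding w_def using u m by (simp_all add: C2_mult C2_exp periodic_mult periodic_exp)
  have grad_w: "grad w = (\<lambda>y. exp (u y) *\<^sub>R fokker_planck_flux u m y)"
    unfolding w_def using u m by (intro ext) (simp add: grad_exp_mult C2_imp_C1)
  obtain x0 where x0: "\<And>x. w x0 \<le> w x"
    using periodic_attains_min[OF w(2) C1_imp_continuous_on[OF C2_imp_C1[OF w(1)]]] by blast
  have "lap w x0 = exp (u x0) * divg (fokker_planck_flux u m) x0"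
  proof -
    have "fokker_planck_flux u m x0 = 0"
      using min_imp_grad_eq_0_lap_nonneg[OF w(1) x0] by (simp add: grad_w)
    then show ?thesis
      using u m unfolding lap_eq_divg_grad grad_w
      by (simp add: divg_scaleR C1_exp C2_imp_C1 C1_field_fokker_planck_flux)
  qed
  then have "0 \<le> exp (u x0) * (lam * (m x0 - m0 x0))"
    using min_imp_grad_eq_0_lap_nonneg[OF w(1) x0] eq[of x0] u m
    by (simp add: divg_fokker_planck_flux algebra_simps)
  then have "m0 x0 \<le> m x0"
    using lam by (simp add: zero_le_mult_iff)
  then have "0 \<le> w x0"
    using m0[of x0] unfolding w_def by simp
  then have "0 \<le> w x"
    using x0[of x] by linarith
  then show ?thesis
    unfolding w_def by (simp add: zero_le_mult_iff)
qed

lemma fokker_planck_le: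
  fixes u m m0 :: "real^'d::finite \<Rightarrow> real"
  assumes u: "C2 u" and m: "C2 m" "periodic m" and lam: "0 \<le> lam"
    and eq: "\<And>x. - lap m x - divg (\<lambda>y. m y *\<^sub>R grad u y) x + lam * m x = lam * m0 x"
    and m_nonneg: "\<And>x. 0 \<le> m x" and m0_le: "\<And>x. m0 x \<le> S"
    and lap_u_le: "\<And>x. lap u x \<le> L" and "L \<le> lam"
  shows "(lam - L) * m x \<le> lam * S"
proof -
  obtain x1 where x1: "\<And>x. m x \<le> m x1"
    using periodic_attains_max[OF m(2) C1_imp_continuous_on[OF C2_imp_C1[OF m(1)]]] by blast
  have max: "grad m x1 = 0" "lap m x1 \<le> 0"
    using max_imp_grad_eq_0_lap_nonpos[OF m(1) x1] by simp_all
  have "(lam - L) * m x \<le> (lam - L) * m x1"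
    using x1 \<open>L \<le> lam\<close> by (simp add: mult_left_mono)
  also have "\<dots> \<le> (lam - lap u x1) * m x1"
    using lap_u_le m_nonneg by (simp add: mult_right_mono)
  also have "\<dots> \<le> lam * m0 x1"
    using eq[of x1] max u m by (simp add: divg_scaleR_grad C2_imp_C1 algebra_simps)
  also have "\<dots> \<le> lam * S"
    using m0_le lam by (simp add: mult_left_mono)
  finally show ?thesis .
qed

lemma hamilton_jacobi_le:
  fixes u F :: "real^'d::finite \<Rightarrow> real"
  assumes u: "C2 u" "periodic u" and lam: "0 \<le> lam"
    and eq: "\<And>x. - lap u x + 1 / 2 * (norm (grad u x))\<^sup>2 + lam * u x = F x"
    and F_le: "\<And>x. F x \<le> c"
  shows "lam * u x \<le> c"
proof -
  obtain x2 where x2: "\<And>x. u x \<le> u x2"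
    using periodic_attains_max[OF u(2) C1_imp_continuous_on[OF C2_imp_C1[OF u(1)]]] by blast
  have "lam * u x \<le> lam * u x2"
    using x2 lam by (simp add: mult_left_mono)
  also have "\<dots> \<le> F x2"
    using max_imp_grad_eq_0_lap_nonpos[OF u(1) x2] eq[of x2] by simp
  finally show ?thesis
    using F_le[of x2] by linarith
qed

lemma fokker_planck_homogeneous_eq_0:
  fixes u \<rho> :: "real^'d::finite \<Rightarrow> real"
  assumes u: "C2 u" "periodic u" and \<rho>: "C2 \<rho>" "periodic \<rho>" and lam: "0 < lam"
    and eq: "\<And>x. - lap \<rho> x - divg (\<lambda>y. \<rho> y *\<^sub>R grad u y) x + lam * \<rho> x = 0"
  shows "\<rho> x = 0"
proof -
  let ?J = "fokker_planck_flux u \<rho>"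
  define H where "H y = (exp (u y) * \<rho> y) *\<^sub>R ?J y" for y
  have H: "C1_field H" "periodic H"
    unfolding H_def[abs_def] using u \<rho>
    by (simp_all add: C1_field_scaleR C1_mult C1_exp C2_imp_C1 C1_field_fokker_planck_flux
        periodic_scaleR periodic_mult periodic_exp periodic_fokker_planck_flux)
  have divg_H: "divg H = (\<lambda>x. exp (u x) * (norm (?J x))\<^sup>2 + lam * (exp (u x) * (\<rho> x)\<^sup>2))"
  proof
    fix x
    have "divg ?J x = lam * \<rho> x"
      using eq[of x] u \<rho> by (simp add: divg_fokker_planck_flux)
    then show "divg H x = exp (u x) * (norm (?J x))\<^sup>2 + lam * (exp (u x) * (\<rho> x)\<^sup>2)"
      unfolding H_def[abs_def] using u \<rho>
      by (simp add: divg_scaleR grad_exp_mult C1_mult C1_exp C2_imp_C1 C1_field_fokker_planck_flux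
          dot_square_norm power2_eq_square)
  qed
  have "divg H x = 0" for x
  proof (rule periodic_nonneg_integral_cube_eq_0)
    show "periodic (divg H)"
      unfolding divg_H using u \<rho> periodic_fokker_planck_flux[OF u(2) \<rho>(2)]
      unfolding periodic_def by simp
    have "continuous_on UNIV u" "continuous_on UNIV \<rho>" "continuous_on UNIV ?J"
      using u \<rho> by (simp_all add: C1_imp_continuous_on C2_imp_C1 C1_field_imp_continuous_on
          C1_field_fokker_planck_flux)
    then show "continuous_on UNIV (divg H)"
      unfolding divg_H
      by (intro continuous_on_add continuous_on_mult continuous_on_exp continuous_on_power
          continuous_on_norm continuous_on_const)
    show "0 \<le> divg H x" for x
      unfolding divg_H using lam by simp
    show "integral (cbox 0 One) (divg H) = 0"
      using H(2,1) by (rule integral_cube_divg_periodic)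
  qed
  moreover have "0 \<le> exp (u x) * (norm (?J x))\<^sup>2" "0 \<le> lam * (exp (u x) * (\<rho> x)\<^sup>2)"
    using lam by simp_all
  ultimately have "lam * (exp (u x) * (\<rho> x)\<^sup>2) = 0"
    unfolding divg_H by (metis add_nonneg_eq_0_iff)
  then show ?thesis
    using lam by simp
qed

lemma abs_le_supn:
  fixes h :: "'a \<Rightarrow> real"
  assumes "bounded (range h)"
  shows "\<bar>h s\<bar> \<le> supn h"
proof -
  obtain B where "\<forall>y\<in>range h. norm y \<le> B"
    using assms bounded_iff by blast
  then have "bdd_above (range (\<lambda>s. \<bar>h s\<bar>))"
    by (intro bdd_aboveI[of _ B]) auto
  then show ?thesis
    unfolding supn_def by (rule cSUP_upper[OF UNIV_I])
qed

lemma holder_density_bounded: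
  fixes m0 :: "real^'d::finite \<Rightarrow> real"
  assumes "holder_density \<alpha> m0" "0 \<le> \<alpha>"
  shows "bounded (range m0)"
proof -
  obtain C where C: "\<And>x y. \<bar>m0 x - m0 y\<bar> \<le> C * norm (x - y) powr \<alpha>"
    using assms(1) unfolding holder_density_def by blast
  obtain B where B: "\<forall>y\<in>cbox 0 (One::real^'d). norm y \<le> B"
    using bounded_cbox[unfolded bounded_iff] by blast
  have "\<bar>m0 y\<bar> \<le> \<bar>m0 0\<bar> + \<bar>C\<bar> * B powr \<alpha>" if "y \<in> cbox 0 One" for y
  proof -
    have "C * norm y powr \<alpha> \<le> \<bar>C\<bar> * norm y powr \<alpha>"
      by (simp add: mult_right_mono)
    also have "\<dots> \<le> \<bar>C\<bar> * B powr \<alpha>"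
      using B that assms(2) by (simp add: mult_left_mono powr_mono2)
    finally show ?thesis
      using C[of y 0] by simp
  qed
  moreover have "range m0 = m0 ` cbox 0 One"
    using assms(1) periodic_image_cube unfolding holder_density_def by metis
  ultimately show ?thesis
    unfolding bounded_iff by auto
qed

section \<open>The linearized system\<close>

locale linearized_mfg =
  fixes lam :: real and fp :: "real \<Rightarrow> real" and u m v \<rho> :: "real^'d::finite \<Rightarrow> real"
  assumes lam_pos: "0 < lam"
    and fp_cont: "continuous_on UNIV fp"
    and C2: "C2 u" "C2 m" "C2 v" "C2 \<rho>"
    and periodic: "periodic u" "periodic m" "periodic v" "periodic \<rho>"
    and eq_v: "\<And>x. - lap v x + grad u x \<bullet> grad v x + lam * v x = fp (m x) * \<rho> x"
    and eq_\<rho>: "\<And>x. - lap \<rho> x - divg (\<lambda>y. \<rho> y *\<^sub>R grad u y) x + lam * \<rho> x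
      = divg (\<lambda>y. m y *\<^sub>R grad v y) x"
begin

abbreviation flux :: "real^'d \<Rightarrow> real^'d" where
  "flux y \<equiv> fokker_planck_flux u \<rho> y + m y *\<^sub>R grad v y"

lemma C1_field_flux: "C1_field flux"
  using C2 by (simp add: C1_field_add C1_field_scaleR C1_field_fokker_planck_flux C1_field_grad C2_imp_C1)

lemma periodic_flux: "periodic flux"
  using periodic by (simp add: periodic_add periodic_scaleR periodic_fokker_planck_flux periodic_grad)

lemma divg_flux: "divg flux x = lam * \<rho> x"
  using C2 eq_\<rho>[of x]
  by (simp add: divg_add C1_field_fokker_planck_flux C1_field_scaleR C1_field_grad C2_imp_C1
      divg_fokker_planck_flux)

lemma continuity:
  "continuous_on UNIV m" "continuous_on UNIV \<rho>" "continuous_on UNIV (grad v)"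
  "continuous_on UNIV (\<lambda>x. fp (m x))"
proof -
  show m: "continuous_on UNIV m" and "continuous_on UNIV \<rho>"
    using C2 by (simp_all add: C1_imp_continuous_on C2_imp_C1)
  show "continuous_on UNIV (grad v)"
    using C2 by (simp add: C1_field_imp_continuous_on C1_field_grad)
  show "continuous_on UNIV (\<lambda>x. fp (m x))"
    using continuous_on_compose2[OF fp_cont m] by simp
qed

text \<open>Testing the \<open>v\<close>-equation with \<open>\<rho>\<close> and the \<open>\<rho>\<close>-equation with \<open>v\<close>, the cross terms
  cancel: the integrand below is the divergence of \<open>v flux - \<rho> Dv\<close>.\<close>

lemma lasry_lions_identity:
  "integral (cbox 0 One) (\<lambda>x. fp (m x) * (\<rho> x)\<^sup>2 + m x * (norm (grad v x))\<^sup>2) = 0"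
proof -
  define G where "G y = v y *\<^sub>R flux y - \<rho> y *\<^sub>R grad v y" for y
  have "divg G = (\<lambda>x. fp (m x) * (\<rho> x)\<^sup>2 + m x * (norm (grad v x))\<^sup>2)"
  proof
    fix x
    have lap_v: "lap v x = grad u x \<bullet> grad v x + lam * v x - fp (m x) * \<rho> x"
      using eq_v[of x] by simp
    have "divg G x = grad v x \<bullet> flux x + v x * (lam * \<rho> x) - (grad \<rho> x \<bullet> grad v x + \<rho> x * lap v x)"
      unfolding G_def[abs_def] using C2
      by (simp add: divg_diff divg_scaleR divg_flux C1_field_scaleR C1_field_flux
          C1_field_grad C2_imp_C1 lap_eq_divg_grad)
    also have "\<dots> = fp (m x) * (\<rho> x)\<^sup>2 + m x * (norm (grad v x))\<^sup>2"
      by (simp add: lap_v fokker_planck_flux_def inner_add_right inner_commute dot_square_norm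
          power2_eq_square algebra_simps)
    finally show "divg G x = fp (m x) * (\<rho> x)\<^sup>2 + m x * (norm (grad v x))\<^sup>2" .
  qed
  moreover have "integral (cbox 0 One) (divg G) = 0"
    unfolding G_def[abs_def] using C2 periodic
    by (intro integral_cube_divg_periodic)
      (simp_all add: C1_field_diff C1_field_scaleR C1_field_flux C1_field_grad C2_imp_C1
        periodic_diff periodic_scaleR periodic_flux periodic_grad)
  ultimately show ?thesis
    by simp
qed

lemma v_eq_0_if_source_eq_0:
  assumes "\<And>x. fp (m x) * \<rho> x = 0"
  shows "v = (\<lambda>_. 0)"
proof
  show "v x = 0" for x
    using C2(3) periodic(3) lam_pos by (rule elliptic_periodic_eq_0[where B = "grad u"]) (metis eq_v assms)
qed

lemma trivial_if_deriv_nonneg: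
  assumes m_nonneg: "\<And>x. 0 \<le> m x" and fp_nonneg: "\<And>s. 0 \<le> fp s"
  shows "v = (\<lambda>_. 0) \<and> \<rho> = (\<lambda>_. 0)"
proof -
  have nonneg: "0 \<le> fp (m x) * (\<rho> x)\<^sup>2" "0 \<le> m x * (norm (grad v x))\<^sup>2" for x
    using m_nonneg fp_nonneg by simp_all
  have sum_eq_0: "fp (m x) * (\<rho> x)\<^sup>2 + m x * (norm (grad v x))\<^sup>2 = 0" for x
  proof (rule periodic_nonneg_integral_cube_eq_0[OF _ _ _ lasry_lions_identity])
    show "periodic (\<lambda>x. fp (m x) * (\<rho> x)\<^sup>2 + m x * (norm (grad v x))\<^sup>2)"
      using periodic periodic_grad[OF periodic(3)] unfolding periodic_def by simp
    show "continuous_on UNIV (\<lambda>x. fp (m x) * (\<rho> x)\<^sup>2 + m x * (norm (grad v x))\<^sup>2)"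
      using continuity
      by (intro continuous_on_add continuous_on_mult continuous_on_power continuous_on_norm)
  qed (use nonneg in simp)
  have "fp (m x) * \<rho> x = 0" for x
  proof -
    have "fp (m x) * (\<rho> x)\<^sup>2 = 0"
      using sum_eq_0[of x] nonneg[of x] by linarith
    then show ?thesis
      by (simp add: power2_eq_square)
  qed
  then have v: "v = (\<lambda>_. 0)"
    by (rule v_eq_0_if_source_eq_0)
  have "\<rho> x = 0" for x
    using C2(1) periodic(1) C2(4) periodic(4) lam_pos
  proof (rule fokker_planck_homogeneous_eq_0)
    show "- lap \<rho> x - divg (\<lambda>y. \<rho> y *\<^sub>R grad u y) x + lam * \<rho> x = 0" for x
      using eq_\<rho>[of x] by (simp add: v grad_def divg_def)
  qed
  with v show ?thesis
    by auto
qed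

lemma rho_energy_estimate:
  assumes grad_u: "\<And>x. norm (grad u x) \<le> K"
  shows "(lam - K\<^sup>2 / 2) * integral (cbox 0 One) (\<lambda>x. (\<rho> x)\<^sup>2)
    \<le> 1 / 2 * integral (cbox 0 One) (\<lambda>x. (m x)\<^sup>2 * (norm (grad v x))\<^sup>2)"
proof -
  define H where "H y = \<rho> y *\<^sub>R flux y" for y
  have "(lam - K\<^sup>2 / 2) * (\<rho> x)\<^sup>2 - 1 / 2 * ((m x)\<^sup>2 * (norm (grad v x))\<^sup>2) \<le> divg H x"
    for x
  proof -
    have "- (norm (\<rho> x *\<^sub>R grad u x))\<^sup>2 / 2 - (norm (m x *\<^sub>R grad v x))\<^sup>2 / 2 \<le> grad \<rho> x \<bullet> flux x"
      unfolding fokker_planck_flux_def by (rule inner_add_ge)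
    moreover have "(norm (\<rho> x *\<^sub>R grad u x))\<^sup>2 \<le> (\<rho> x)\<^sup>2 * K\<^sup>2"
      using grad_u[of x] by (simp add: power_mult_distrib mult_left_mono power_mono)
    moreover have "divg H x = grad \<rho> x \<bullet> flux x + lam * (\<rho> x)\<^sup>2"
      unfolding H_def[abs_def] using C2
      by (simp add: divg_scaleR C1_field_flux C2_imp_C1 divg_flux power2_eq_square)
    ultimately show ?thesis
      by (simp add: power_mult_distrib algebra_simps)
  qed
  moreover have cont: "continuous_on UNIV (\<lambda>x. (\<rho> x)\<^sup>2)"
    "continuous_on UNIV (\<lambda>x. (m x)\<^sup>2 * (norm (grad v x))\<^sup>2)"
    by (intro continuous_on_mult continuous_on_power continuous_on_norm continuity)+
  moreover have "periodic H" "C1_field H"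
    unfolding H_def[abs_def] using C2 periodic
    by (simp_all add: C1_field_scaleR C1_field_flux C2_imp_C1 periodic_scaleR periodic_flux)
  ultimately have "integral (cbox 0 One)
      (\<lambda>x. (lam - K\<^sup>2 / 2) * (\<rho> x)\<^sup>2 - 1 / 2 * ((m x)\<^sup>2 * (norm (grad v x))\<^sup>2)) \<le> 0"
    by (intro integral_cube_nonpos_if_le_divg continuous_intros continuity)
  moreover have "(\<lambda>x. (lam - K\<^sup>2 / 2) * (\<rho> x)\<^sup>2) integrable_on cbox 0 One"
    "(\<lambda>x. 1 / 2 * ((m x)\<^sup>2 * (norm (grad v x))\<^sup>2)) integrable_on cbox 0 One"
    using cont by (simp_all add: continuous_on_imp_integrable_on_cbox continuous_on_mult_left)
  ultimately show ?thesis
    by (simp add: integral_diff)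
qed

lemma lasry_lions_bound:
  assumes fp_bound: "\<And>s. \<bar>fp s\<bar> \<le> F"
  shows "integral (cbox 0 One) (\<lambda>x. m x * (norm (grad v x))\<^sup>2)
    \<le> F * integral (cbox 0 One) (\<lambda>x. (\<rho> x)\<^sup>2)"
proof -
  have cont: "continuous_on UNIV (\<lambda>x. (\<rho> x)\<^sup>2)"
    "continuous_on UNIV (\<lambda>x. fp (m x) * (\<rho> x)\<^sup>2)"
    "continuous_on UNIV (\<lambda>x. m x * (norm (grad v x))\<^sup>2)"
    by (intro continuous_on_mult continuous_on_power continuous_on_norm continuity)+
  have "- F \<le> fp s" for s
    using fp_bound[of s] by linarith
  then have "integral (cbox 0 One) (\<lambda>x. - F * (\<rho> x)\<^sup>2)
      \<le> integral (cbox 0 One) (\<lambda>x. fp (m x) * (\<rho> x)\<^sup>2)"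
    using cont
    by (intro integral_le continuous_on_imp_integrable_on_cbox continuous_on_mult_left mult_right_mono)
      simp_all
  moreover have "integral (cbox 0 One) (\<lambda>x. fp (m x) * (\<rho> x)\<^sup>2)
      + integral (cbox 0 One) (\<lambda>x. m x * (norm (grad v x))\<^sup>2) = 0"
    using lasry_lions_identity cont by (simp add: integral_add continuous_on_imp_integrable_on_cbox)
  ultimately show ?thesis
    by simp
qed

lemma trivial_if_lam_large:
  assumes m_nonneg: "\<And>x. 0 \<le> m x" and m_le: "\<And>x. m x \<le> m_max"
    and fp_bound: "\<And>s. \<bar>fp s\<bar> \<le> F" and grad_u: "\<And>x. norm (grad u x) \<le> K"
    and lam_large: "K\<^sup>2 / 2 + m_max * F / 2 < lam"
  shows "v = (\<lambda>_. 0) \<and> \<rho> = (\<lambda>_. 0)"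
proof -
  let ?int = "integral (cbox 0 One)"
  define E where "E = ?int (\<lambda>x. (\<rho> x)\<^sup>2)"
  define D where "D = ?int (\<lambda>x. m x * (norm (grad v x))\<^sup>2)"
  have cont: "continuous_on UNIV (\<lambda>x. (\<rho> x)\<^sup>2)"
    "continuous_on UNIV (\<lambda>x. m x * (norm (grad v x))\<^sup>2)"
    "continuous_on UNIV (\<lambda>x. (m x)\<^sup>2 * (norm (grad v x))\<^sup>2)"
    by (intro continuous_on_mult continuous_on_power continuous_on_norm continuity)+
  have "(m x)\<^sup>2 * (norm (grad v x))\<^sup>2 \<le> m_max * (m x * (norm (grad v x))\<^sup>2)" for x
  proof -
    have "m x * (m x * (norm (grad v x))\<^sup>2) \<le> m_max * (m x * (norm (grad v x))\<^sup>2)"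
      using m_le[of x] m_nonneg[of x] by (simp add: mult_right_mono)
    then show ?thesis
      by (simp add: power2_eq_square mult.assoc)
  qed
  then have "?int (\<lambda>x. (m x)\<^sup>2 * (norm (grad v x))\<^sup>2) \<le> ?int (\<lambda>x. m_max * (m x * (norm (grad v x))\<^sup>2))"
    using cont by (intro integral_le continuous_on_imp_integrable_on_cbox continuous_on_mult_left)
  then have "(lam - K\<^sup>2 / 2) * E \<le> m_max * D / 2"
    using rho_energy_estimate[OF grad_u] unfolding E_def D_def by simp
  also have "\<dots> \<le> m_max * (F * E) / 2"
    using lasry_lions_bound[OF fp_bound] m_nonneg[of 0] m_le[of 0] unfolding D_def E_def
    by (simp add: mult_left_mono)
  finally have "(lam - K\<^sup>2 / 2 - m_max * F / 2) * E \<le> 0"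
    by (simp add: algebra_simps)
  moreover have "0 \<le> E"
    unfolding E_def using cont by (intro integral_nonneg continuous_on_imp_integrable_on_cbox) simp_all
  moreover have "0 < lam - K\<^sup>2 / 2 - m_max * F / 2"
    using lam_large by simp
  ultimately have integral_eq_0: "integral (cbox 0 One) (\<lambda>x. (\<rho> x)\<^sup>2) = 0"
    using mult_le_cancel_left_pos[of "lam - K\<^sup>2 / 2 - m_max * F / 2" E 0] unfolding E_def
    by linarith
  have "periodic (\<lambda>x. (\<rho> x)\<^sup>2)"
    using periodic(4) unfolding periodic_def by simp
  then have "(\<rho> x)\<^sup>2 = 0" for x
    by (rule periodic_nonneg_integral_cube_eq_0[OF _ cont(1) _ integral_eq_0]) simp
  then have \<rho>: "\<rho> = (\<lambda>_. 0)"
    by auto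
  then have "v = (\<lambda>_. 0)"
    by (intro v_eq_0_if_source_eq_0) simp
  with \<rho> show ?thesis
    by simp
qed

end

lemma mfg_sol_density_nonneg:
  assumes sol: "mfg_sol lam f m0 u m" and "0 < lam" "\<And>x. 0 \<le> m0 x"
  shows "0 \<le> m x"
proof -
  have u: "C2 u" "periodic u" and m: "C2 m" "periodic m"
    and eq_m: "\<And>x. - lap m x - divg (\<lambda>y. m y *\<^sub>R grad u y) x + lam * m x = lam * m0 x"
    using sol unfolding mfg_sol_def by simp_all
  show ?thesis
    by (rule fokker_planck_nonneg[OF u m assms(2,3) eq_m])
qed

lemma mfg_sol_density_le:
  fixes m0 u m :: "real^'d::finite \<Rightarrow> real"
  assumes sol: "mfg_sol lam f m0 u m" and lam: "0 < lam"
    and m0: "\<And>x. 0 \<le> m0 x" "\<And>x. m0 x \<le> S"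
    and f_bound: "\<And>s. \<bar>f s\<bar> \<le> F" and grad_u: "\<And>x. norm (grad u x) \<le> K"
    and lam_large: "2 * (2 * F + K\<^sup>2 / 2) \<le> lam"
  shows "m x \<le> 2 * S"
proof -
  have u: "C2 u" "periodic u" and m: "C2 m" "periodic m"
    and eq_u: "\<And>x. - lap u x + 1 / 2 * (norm (grad u x))\<^sup>2 + lam * u x = f (m x)"
    and eq_m: "\<And>x. - lap m x - divg (\<lambda>y. m y *\<^sub>R grad u y) x + lam * m x = lam * m0 x"
    using sol unfolding mfg_sol_def by simp_all
  define L where "L = K\<^sup>2 / 2 + 2 * F"
  have lam_u: "lam * u x \<le> F" for x
    using u less_imp_le[OF lam] eq_u by (rule hamilton_jacobi_le) (rule abs_le_D1[OF f_bound])
  have grad_u_sq: "(norm (grad u x))\<^sup>2 \<le> K\<^sup>2" for x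
    using grad_u[of x] by (intro power_mono) simp_all
  have lap_u: "lap u x \<le> L" for x
    using eq_u[of x] lam_u[of x] grad_u_sq[of x] abs_le_D2[OF f_bound, of "m x"] unfolding L_def
    by linarith
  have "0 \<le> F" "0 \<le> S"
    using f_bound[of 0] m0[of 0] by linarith+
  then have "2 * L \<le> lam" "0 \<le> L"
    using lam_large unfolding L_def by simp_all
  with u(1) m less_imp_le[OF lam] eq_m mfg_sol_density_nonneg[OF sol lam m0(1)] m0(2) lap_u
  have "(lam - L) * m x \<le> lam * S"
    by (intro fokker_planck_le) simp_all
  also have "\<dots> \<le> (lam - L) * (2 * S)"
    using mult_right_mono[OF \<open>2 * L \<le> lam\<close> \<open>0 \<le> S\<close>] by (simp add: algebra_simps)
  finally show ?thesis
    using lam \<open>2 * L \<le> lam\<close> \<open>0 \<le> L\<close> by (simp add: mult_le_cancel_left_pos)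
qed

lemma stableI:
  assumes "mfg_sol lam f m0 u m" "continuous_on UNIV (deriv f)" "0 < lam"
    and "\<And>v \<rho>. linearized_mfg lam (deriv f) u m v \<rho> \<Longrightarrow> v = (\<lambda>_. 0) \<and> \<rho> = (\<lambda>_. 0)"
  shows "stable lam f u m"
  unfolding stable_def
proof (intro allI impI, elim conjE)
  fix v \<rho>
  assume "periodic v" "periodic \<rho>" "C2 v" "C2 \<rho>"
    "\<forall>x. - lap v x + grad u x \<bullet> grad v x + lam * v x = deriv f (m x) * \<rho> x"
    "\<forall>x. - lap \<rho> x - divg (\<lambda>y. \<rho> y *\<^sub>R grad u y) x + lam * \<rho> x = divg (\<lambda>y. m y *\<^sub>R grad v y) x"
  with assms(1-3) have "linearized_mfg lam (deriv f) u m v \<rho>"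
    unfolding mfg_sol_def by unfold_locales simp_all
  then show "v = (\<lambda>_. 0) \<and> \<rho> = (\<lambda>_. 0)"
    by (rule assms(4))
qed

theorem theorem2p9:
  fixes f :: "real \<Rightarrow> real" and m0 u m :: "real^'d::finite \<Rightarrow> real"
    and lam \<alpha> K :: real
  assumes lam: "lam > 0"
    and alpha: "0 < \<alpha>" "\<alpha> < 1"
    and m0: "holder_density \<alpha> m0"
    and f: "C1b f"
    and sol: "mfg_sol lam f m0 u m"
    and Kpos: "K > 0"
    and Kbound: "\<forall>lam' (m0' :: real^'d \<Rightarrow> real) u' m'. lam' > 0 \<and> holder_density \<alpha> m0'
                  \<and> mfg_sol lam' f m0' u' m' \<longrightarrow> (\<forall>x. norm (grad u' x) \<le> K)"
    and cond: "(\<forall>s. deriv f s \<ge> 0) \<or>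
               lam > max (2 * (2 * supn f + K\<^sup>2 / 2)) (K\<^sup>2 / 2 + supn m0 * supn (deriv f))"
  shows "stable lam f u m"
proof -
  have m0_nonneg: "\<And>x. 0 \<le> m0 x"
    using m0 unfolding holder_density_def by simp
  have m0_le: "\<And>x. m0 x \<le> supn m0"
    using abs_le_supn[OF holder_density_bounded[OF m0 less_imp_le[OF alpha(1)]]] by (rule abs_le_D1)
  have grad_u: "\<And>x. norm (grad u x) \<le> K"
    using Kbound lam m0 sol by blast
  have f_bound: "\<And>s. \<bar>f s\<bar> \<le> supn f" and f'_bound: "\<And>s. \<bar>deriv f s\<bar> \<le> supn (deriv f)"
    and f'_cont: "continuous_on UNIV (deriv f)"
    using f unfolding C1b_def by (simp_all add: abs_le_supn)
  show ?thesis
  proof (rule stableI[OF sol f'_cont lam])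
    fix v \<rho>
    assume "linearized_mfg lam (deriv f) u m v \<rho>"
    then interpret linearized_mfg lam "deriv f" u m v \<rho> .
    have m_nonneg: "\<And>x. 0 \<le> m x"
      using sol lam m0_nonneg by (rule mfg_sol_density_nonneg)
    from cond show "v = (\<lambda>_. 0) \<and> \<rho> = (\<lambda>_. 0)"
    proof
      assume "\<forall>s. 0 \<le> deriv f s"
      then show ?thesis
        using m_nonneg by (intro trivial_if_deriv_nonneg) simp_all
    next
      assume "lam > max (2 * (2 * supn f + K\<^sup>2 / 2)) (K\<^sup>2 / 2 + supn m0 * supn (deriv f))"
      then have lam_ge: "2 * (2 * supn f + K\<^sup>2 / 2) \<le> lam"
        and lam_gt: "K\<^sup>2 / 2 + 2 * supn m0 * supn (deriv f) / 2 < lam"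
        by simp_all
      have "m x \<le> 2 * supn m0" for x
        by (rule mfg_sol_density_le[OF sol lam m0_nonneg m0_le f_bound grad_u lam_ge])
      then show ?thesis
        by (rule trivial_if_lam_large[OF m_nonneg _ f'_bound grad_u lam_gt])
    qed
  qed
qed

end
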